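(* Let $\mathcal A\subseteq\mathrm{Mat}(\mathbb{Z}^D,p)$ be an invertible subalgebra with spread $\ell$, and let $\mathcal B$ be its commutant within $\mathrm{Mat}(\mathbb{Z}^D,p)$. Then both $\mathcal A$ and $\mathcal B$ are VS.
   Context: For $p:\mathbb{Z}^D\to\mathbb{Z}_{>0}$ and finite $S$, $\mathrm{Mat}(S,p)=\bigotimes_{s\in S}M_{p(s)}(\mathbb{C})$ with embeddings by tensoring identities; $\mathrm{Mat}(\mathbb{Z}^D,p)$ is the union. $\mathrm{Supp}(x)$ is the smallest finite $S$ with $x\in\mathrm{Mat}(S,p)$; $S^{+\ell}$ is the set of sites at $\ell_\infty$-distance at most $\ell$ from $S$. A unital $*$-subalgebra $\mathcal A$ is invertible with spread $\ell>0$ if every $x\in\mathrm{Mat}(\mathbb{Z}^D,p)$ is a finite sum $x=\sum_ia_ib_i$ with $a_i\in\mathcal A$, $b_i$ in the commutant of $\mathcal A$ within $\mathrm{Mat}(\mathbb{Z}^D,p)$, and $\mathrm{Supp}(a_i),\mathrm{Supp}(b_i)\subseteq\mathrm{Supp}(x)^{+\ell}$. A $*$-subalgebra $\mathcal C$ is VS if there is $\ell'>0$ such that for every $c\in\mathcal C\setminus\mathbb{C}\mathbf 1$ and every $s\in\mathrm{Supp}(c)$ there is $w\in\mathcal C\cap\mathrm{Mat}(\{s\}^{+\ell'},p)$ with $[c,w]\neq0$. *)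

theory Defs
  imports Complex_Main
begin

text \<open>Sites of the lattice Z^D are functions 'd => int for a finite index type 'd
  (D = CARD('d)). The quasi-local algebra Mat(Z^D,p) is represented faithfully
  on the span of product basis vectors with finitely many sites away from the
  reference state 0: an operator is a kernel on pairs of such configurations.\<close>

type_synonym 'd site = "'d \<Rightarrow> int"
type_synonym 'd cfg = "'d site \<Rightarrow> nat"
type_synonym 'd op = "'d cfg \<Rightarrow> 'd cfg \<Rightarrow> complex"

definition valid_cfg :: "('d site \<Rightarrow> nat) \<Rightarrow> 'd cfg \<Rightarrow> bool" where
  "valid_cfg p \<sigma> \<longleftrightarrow> (\<forall>s. \<sigma> s < p s) \<and> finite {s. \<sigma> s \<noteq> 0}"

definition agree_off :: "'d site set \<Rightarrow> 'd cfg \<Rightarrow> 'd cfg \<Rightarrow> bool" where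
  "agree_off S \<sigma> \<tau> \<longleftrightarrow> (\<forall>s. s \<notin> S \<longrightarrow> \<sigma> s = \<tau> s)"

definition agree_on :: "'d site set \<Rightarrow> 'd cfg \<Rightarrow> 'd cfg \<Rightarrow> bool" where
  "agree_on S \<sigma> \<tau> \<longleftrightarrow> (\<forall>s\<in>S. \<sigma> s = \<tau> s)"

text \<open>inMat p S K: K is (the image of) an element of Mat(S,p) = tensor product over S
  of M_{p(s)}(C), embedded by tensoring with identities.\<close>
definition inMat :: "('d site \<Rightarrow> nat) \<Rightarrow> 'd site set \<Rightarrow> 'd op \<Rightarrow> bool" where
  "inMat p S K \<longleftrightarrow> finite S
     \<and> (\<forall>\<sigma> \<tau>. \<not> (valid_cfg p \<sigma> \<and> valid_cfg p \<tau>) \<longrightarrow> K \<sigma> \<tau> = 0)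
     \<and> (\<forall>\<sigma> \<tau>. valid_cfg p \<sigma> \<longrightarrow> valid_cfg p \<tau> \<longrightarrow> \<not> agree_off S \<sigma> \<tau> \<longrightarrow> K \<sigma> \<tau> = 0)
     \<and> (\<forall>\<sigma> \<tau> \<sigma>' \<tau>'. valid_cfg p \<sigma> \<longrightarrow> valid_cfg p \<tau> \<longrightarrow> valid_cfg p \<sigma>' \<longrightarrow> valid_cfg p \<tau>' \<longrightarrow>
          agree_off S \<sigma> \<tau> \<longrightarrow> agree_off S \<sigma>' \<tau>' \<longrightarrow> agree_on S \<sigma> \<sigma>' \<longrightarrow> agree_on S \<tau> \<tau>' \<longrightarrow>
          K \<sigma> \<tau> = K \<sigma>' \<tau>')"

definition MatZ :: "('d site \<Rightarrow> nat) \<Rightarrow> 'd op set" where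
  "MatZ p = {K. \<exists>S. inMat p S K}"

definition Supp :: "('d site \<Rightarrow> nat) \<Rightarrow> 'd op \<Rightarrow> 'd site set" where
  "Supp p K = \<Inter> {S. inMat p S K}"

definition nbhd :: "'d site set \<Rightarrow> nat \<Rightarrow> 'd site set" where
  "nbhd S l = {t. \<exists>s\<in>S. \<forall>i. \<bar>t i - s i\<bar> \<le> int l}"

definition opmult :: "('d site \<Rightarrow> nat) \<Rightarrow> 'd op \<Rightarrow> 'd op \<Rightarrow> 'd op" where
  "opmult p K L = (\<lambda>\<sigma> \<tau>. \<Sum>\<rho>\<in>{\<rho>. valid_cfg p \<rho> \<and> K \<sigma> \<rho> \<noteq> 0}. K \<sigma> \<rho> * L \<rho> \<tau>)"

definition opadd :: "'d op \<Rightarrow> 'd op \<Rightarrow> 'd op" where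
  "opadd K L = (\<lambda>\<sigma> \<tau>. K \<sigma> \<tau> + L \<sigma> \<tau>)"

definition opscal :: "complex \<Rightarrow> 'd op \<Rightarrow> 'd op" where
  "opscal c K = (\<lambda>\<sigma> \<tau>. c * K \<sigma> \<tau>)"

definition opadj :: "'d op \<Rightarrow> 'd op" where
  "opadj K = (\<lambda>\<sigma> \<tau>. cnj (K \<tau> \<sigma>))"

definition opone :: "('d site \<Rightarrow> nat) \<Rightarrow> 'd op" where
  "opone p = (\<lambda>\<sigma> \<tau>. if valid_cfg p \<sigma> \<and> \<sigma> = \<tau> then 1 else 0)"

definition unital_star_subalg :: "('d site \<Rightarrow> nat) \<Rightarrow> 'd op set \<Rightarrow> bool" where
  "unital_star_subalg p A \<longleftrightarrow> A \<subseteq> MatZ p \<and> opone p \<in> A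
     \<and> (\<forall>x\<in>A. \<forall>y\<in>A. opadd x y \<in> A \<and> opmult p x y \<in> A)
     \<and> (\<forall>c. \<forall>x\<in>A. opscal c x \<in> A) \<and> (\<forall>x\<in>A. opadj x \<in> A)"

definition commutant :: "('d site \<Rightarrow> nat) \<Rightarrow> 'd op set \<Rightarrow> 'd op set" where
  "commutant p A = {b \<in> MatZ p. \<forall>a\<in>A. opmult p a b = opmult p b a}"

definition invertible_spread :: "('d site \<Rightarrow> nat) \<Rightarrow> 'd op set \<Rightarrow> nat \<Rightarrow> bool" where
  "invertible_spread p A l \<longleftrightarrow> unital_star_subalg p A \<and> 0 < l \<and>
     (\<forall>x\<in>MatZ p. \<exists>(n::nat) a b.
        x = (\<lambda>\<sigma> \<tau>. \<Sum>i<n. opmult p (a i) (b i) \<sigma> \<tau>) \<and>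
        (\<forall>i<n. a i \<in> A \<and> b i \<in> commutant p A \<and>
               Supp p (a i) \<subseteq> nbhd (Supp p x) l \<and> Supp p (b i) \<subseteq> nbhd (Supp p x) l))"

definition VS :: "('d site \<Rightarrow> nat) \<Rightarrow> 'd op set \<Rightarrow> bool" where
  "VS p C \<longleftrightarrow> (\<exists>l'::nat. 0 < l' \<and>
     (\<forall>c\<in>C. c \<notin> range (\<lambda>z. opscal z (opone p)) \<longrightarrow>
        (\<forall>s\<in>Supp p c. \<exists>w\<in>C. inMat p (nbhd {s} l') w \<and> opmult p c w \<noteq> opmult p w c)))"

end

theory Submission
  imports Defs "HOL-Library.FuncSet"
begin

text \<open>A site s of the support of c is detected by a matrix unit at s that does not commute
  with c: if c commuted with all of them, c would already lie in Mat(Supp c - {s}).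
  Invertibility writes such a matrix unit as a sum of products a_k b_k with a_k \<in> A and b_k
  in the commutant B, all localised within distance l of s. If c commuted with every a_k and
  every b_k it would commute with the matrix unit. Hence for c \<in> A some a_k, and for c \<in> B
  some b_k, fails to commute with c, and VS holds with l' = l for both algebras.\<close>

lemma valid_cfg_upd: "valid_cfg p \<sigma> \<Longrightarrow> k < p s \<Longrightarrow> valid_cfg p (\<sigma>(s := k))"
  unfolding valid_cfg_def
  by (auto intro: finite_subset[of _ "insert s {t. \<sigma> t \<noteq> 0}"])

lemma valid_cfg_merge:
  "valid_cfg p \<sigma> \<Longrightarrow> valid_cfg p \<sigma>' \<Longrightarrow> valid_cfg p (\<lambda>t. if t \<in> S then \<sigma> t else \<sigma>' t)"
  unfolding valid_cfg_def
  by (auto intro: finite_subset[of _ "{t. \<sigma> t \<noteq> 0} \<union> {t. \<sigma>' t \<noteq> 0}"])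

lemma inMat_zero_if_invalid: "inMat p S K \<Longrightarrow> \<not> (valid_cfg p \<sigma> \<and> valid_cfg p \<tau>) \<Longrightarrow> K \<sigma> \<tau> = 0"
  unfolding inMat_def by blast

lemma inMat_zero_if_not_agree_off:
  "inMat p S K \<Longrightarrow> valid_cfg p \<sigma> \<Longrightarrow> valid_cfg p \<tau> \<Longrightarrow> \<not> agree_off S \<sigma> \<tau> \<Longrightarrow> K \<sigma> \<tau> = 0"
  unfolding inMat_def by blast

lemma inMat_entry_eq:
  assumes "inMat p S K" "valid_cfg p \<sigma>" "valid_cfg p \<tau>" "valid_cfg p \<sigma>'" "valid_cfg p \<tau>'"
    "agree_off S \<sigma> \<tau>" "agree_off S \<sigma>' \<tau>'" "agree_on S \<sigma> \<sigma>'" "agree_on S \<tau> \<tau>'"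
  shows "K \<sigma> \<tau> = K \<sigma>' \<tau>'"
  using assms unfolding inMat_def by blast

subsection \<open>Products of local kernels\<close>

text \<open>Kernels changing only the sites of a finite set U. For them the sum defining
  \<^const>\<open>opmult\<close> runs over a finite set (over an infinite one it would be the junk value 0).\<close>
definition local_on :: "('d site \<Rightarrow> nat) \<Rightarrow> 'd site set \<Rightarrow> 'd op \<Rightarrow> bool" where
  "local_on p U K \<longleftrightarrow> finite U \<and>
     (\<forall>\<sigma> \<tau>. K \<sigma> \<tau> \<noteq> 0 \<longrightarrow> valid_cfg p \<sigma> \<and> valid_cfg p \<tau> \<and> agree_off U \<sigma> \<tau>)"

definition agreeing_cfgs :: "('d site \<Rightarrow> nat) \<Rightarrow> 'd site set \<Rightarrow> 'd cfg \<Rightarrow> 'd cfg set" where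
  "agreeing_cfgs p U \<sigma> = {\<rho>. valid_cfg p \<rho> \<and> agree_off U \<sigma> \<rho>}"

lemma finite_agreeing_cfgs:
  assumes "finite U" shows "finite (agreeing_cfgs p U \<sigma>)"
proof -
  have "inj_on (\<lambda>\<rho>. restrict \<rho> U) (agreeing_cfgs p U \<sigma>)"
  proof (rule inj_onI, rule ext)
    fix x y t assume "x \<in> agreeing_cfgs p U \<sigma>" "y \<in> agreeing_cfgs p U \<sigma>"
      and "restrict x U = restrict y U"
    then show "x t = y t"
      unfolding agreeing_cfgs_def agree_off_def by (cases "t \<in> U") (metis restrict_apply', auto)
  qed
  moreover have "(\<lambda>\<rho>. restrict \<rho> U) ` agreeing_cfgs p U \<sigma> \<subseteq> PiE U (\<lambda>t. {..<p t})"
    by (auto simp: agreeing_cfgs_def valid_cfg_def restrict_PiE_iff)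
  moreover have "finite (PiE U (\<lambda>t. {..<p t}))"
    using assms by (intro finite_PiE) auto
  ultimately show ?thesis
    using finite_imageD finite_subset by blast
qed

lemma agreeing_cfgs_eq:
  "agree_off U \<sigma> \<rho> \<Longrightarrow> U \<subseteq> U' \<Longrightarrow> agreeing_cfgs p U' \<rho> = agreeing_cfgs p U' \<sigma>"
  by (auto simp: agreeing_cfgs_def agree_off_def)

lemma local_on_finite_nonzero:
  assumes "local_on p U K" shows "finite {\<rho>. valid_cfg p \<rho> \<and> K \<sigma> \<rho> \<noteq> 0}"
proof (rule finite_subset)
  show "{\<rho>. valid_cfg p \<rho> \<and> K \<sigma> \<rho> \<noteq> 0} \<subseteq> agreeing_cfgs p U \<sigma>"
    using assms by (auto simp: local_on_def agreeing_cfgs_def)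
  show "finite (agreeing_cfgs p U \<sigma>)"
    using assms by (simp add: local_on_def finite_agreeing_cfgs)
qed

lemma local_on_mono: "local_on p U K \<Longrightarrow> U \<subseteq> U' \<Longrightarrow> finite U' \<Longrightarrow> local_on p U' K"
  by (auto simp: local_on_def agree_off_def)

lemma inMat_imp_local_on: "inMat p S K \<Longrightarrow> local_on p S K"
  unfolding inMat_def local_on_def by blast

lemma local_on_opmult:
  assumes K: "local_on p U K" and L: "local_on p V L"
  shows "local_on p (U \<union> V) (opmult p K L)"
  unfolding local_on_def
proof (intro conjI allI impI)
  show "finite (U \<union> V)" using K L by (simp add: local_on_def)
  fix \<sigma> \<tau> assume "opmult p K L \<sigma> \<tau> \<noteq> 0"
  then obtain \<rho> where "K \<sigma> \<rho> \<noteq> 0" "L \<rho> \<tau> \<noteq> 0"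
    unfolding opmult_def by (auto elim: sum.not_neutral_contains_not_neutral)
  with K L have "valid_cfg p \<sigma>" "valid_cfg p \<tau>" "agree_off U \<sigma> \<rho>" "agree_off V \<rho> \<tau>"
    by (auto simp: local_on_def)
  then show "valid_cfg p \<sigma>" "valid_cfg p \<tau>" "agree_off (U \<union> V) \<sigma> \<tau>"
    by (auto simp: agree_off_def)
qed

lemma local_on_sum:
  assumes "\<And>i. i < n \<Longrightarrow> local_on p U (X i)" and "finite U"
  shows "local_on p U (\<lambda>\<sigma> \<tau>. \<Sum>i<n. X i \<sigma> \<tau>)"
  unfolding local_on_def
proof (intro conjI allI impI)
  fix \<sigma> \<tau> assume "(\<Sum>i<n. X i \<sigma> \<tau>) \<noteq> 0"
  then obtain i where "i < n" "X i \<sigma> \<tau> \<noteq> 0"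
    by (auto elim: sum.not_neutral_contains_not_neutral)
  with assms show "valid_cfg p \<sigma>" "valid_cfg p \<tau>" "agree_off U \<sigma> \<tau>"
    by (auto simp: local_on_def)
qed fact

lemma opmult_eq_sum_over:
  assumes "finite {\<rho>. valid_cfg p \<rho> \<and> K \<sigma> \<rho> \<noteq> 0}" and "finite V" and "\<forall>\<rho>\<in>V. valid_cfg p \<rho>"
    and "\<And>\<rho>. valid_cfg p \<rho> \<Longrightarrow> \<rho> \<notin> V \<Longrightarrow> K \<sigma> \<rho> * L \<rho> \<tau> = 0"
  shows "opmult p K L \<sigma> \<tau> = (\<Sum>\<rho>\<in>V. K \<sigma> \<rho> * L \<rho> \<tau>)"
proof -
  let ?N = "{\<rho>. valid_cfg p \<rho> \<and> K \<sigma> \<rho> \<noteq> 0}"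
  have "opmult p K L \<sigma> \<tau> = (\<Sum>\<rho>\<in>?N \<union> V. K \<sigma> \<rho> * L \<rho> \<tau>)"
    unfolding opmult_def by (rule sum.mono_neutral_left) (use assms in auto)
  also have "\<dots> = (\<Sum>\<rho>\<in>V. K \<sigma> \<rho> * L \<rho> \<tau>)"
    by (rule sum.mono_neutral_right) (use assms in auto)
  finally show ?thesis .
qed

lemma opmult_eq_sum_agreeing:
  assumes "local_on p U K"
  shows "opmult p K L \<sigma> \<tau> = (\<Sum>\<rho>\<in>agreeing_cfgs p U \<sigma>. K \<sigma> \<rho> * L \<rho> \<tau>)"
  using assms
  by (intro opmult_eq_sum_over local_on_finite_nonzero finite_agreeing_cfgs)
    (auto simp: local_on_def agreeing_cfgs_def)

lemma opmult_assoc: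
  assumes K: "local_on p U K" and L: "local_on p V L"
  shows "opmult p (opmult p K L) M = opmult p K (opmult p L M)"
proof (intro ext)
  fix \<sigma> \<tau>
  let ?W = "agreeing_cfgs p (U \<union> V) \<sigma>"
  have fin: "finite (U \<union> V)" using K L by (simp add: local_on_def)
  have KW: "local_on p (U \<union> V) K" and LW: "local_on p (U \<union> V) L"
    using local_on_mono[OF K _ fin] local_on_mono[OF L _ fin] by auto
  have inner: "(\<Sum>\<mu>\<in>?W. K \<sigma> \<rho> * (L \<rho> \<mu> * M \<mu> \<tau>)) = K \<sigma> \<rho> * opmult p L M \<rho> \<tau>" for \<rho>
  proof (cases "K \<sigma> \<rho> = 0")
    case False
    then have "agree_off U \<sigma> \<rho>" using K by (simp add: local_on_def)
    then have "agreeing_cfgs p (U \<union> V) \<rho> = ?W" by (rule agreeing_cfgs_eq) auto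
    then show ?thesis by (simp add: opmult_eq_sum_agreeing[OF LW] sum_distrib_left)
  qed simp
  have "opmult p (opmult p K L) M \<sigma> \<tau> = (\<Sum>\<mu>\<in>?W. (\<Sum>\<rho>\<in>?W. K \<sigma> \<rho> * L \<rho> \<mu>) * M \<mu> \<tau>)"
    by (simp add: opmult_eq_sum_agreeing[OF local_on_opmult[OF K L]] opmult_eq_sum_agreeing[OF KW])
  also have "\<dots> = (\<Sum>\<mu>\<in>?W. \<Sum>\<rho>\<in>?W. K \<sigma> \<rho> * (L \<rho> \<mu> * M \<mu> \<tau>))"
    by (simp add: sum_distrib_right mult.assoc)
  also have "\<dots> = (\<Sum>\<rho>\<in>?W. \<Sum>\<mu>\<in>?W. K \<sigma> \<rho> * (L \<rho> \<mu> * M \<mu> \<tau>))"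
    by (rule sum.swap)
  also have "\<dots> = opmult p K (opmult p L M) \<sigma> \<tau>"
    by (simp add: inner opmult_eq_sum_agreeing[OF KW])
  finally show "opmult p (opmult p K L) M \<sigma> \<tau> = opmult p K (opmult p L M) \<sigma> \<tau>" .
qed

lemma opmult_sum_distrib_left:
  assumes "local_on p U K"
  shows "opmult p K (\<lambda>\<sigma> \<tau>. \<Sum>i<n. X i \<sigma> \<tau>) = (\<lambda>\<sigma> \<tau>. \<Sum>i<n. opmult p K (X i) \<sigma> \<tau>)"
proof (intro ext)
  fix \<sigma> \<tau>
  have "opmult p K (\<lambda>\<sigma> \<tau>. \<Sum>i<n. X i \<sigma> \<tau>) \<sigma> \<tau>
      = (\<Sum>\<rho>\<in>agreeing_cfgs p U \<sigma>. \<Sum>i<n. K \<sigma> \<rho> * X i \<rho> \<tau>)"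
    by (simp add: opmult_eq_sum_agreeing[OF assms] sum_distrib_left)
  also have "\<dots> = (\<Sum>i<n. opmult p K (X i) \<sigma> \<tau>)"
    by (subst sum.swap) (simp add: opmult_eq_sum_agreeing[OF assms])
  finally show "opmult p K (\<lambda>\<sigma> \<tau>. \<Sum>i<n. X i \<sigma> \<tau>) \<sigma> \<tau> = (\<Sum>i<n. opmult p K (X i) \<sigma> \<tau>)" .
qed

lemma opmult_sum_distrib_right:
  assumes X: "\<And>i. i < n \<Longrightarrow> local_on p U (X i)" and "finite U"
  shows "opmult p (\<lambda>\<sigma> \<tau>. \<Sum>i<n. X i \<sigma> \<tau>) M = (\<lambda>\<sigma> \<tau>. \<Sum>i<n. opmult p (X i) M \<sigma> \<tau>)"
proof (intro ext)
  fix \<sigma> \<tau>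
  have "opmult p (\<lambda>\<sigma> \<tau>. \<Sum>i<n. X i \<sigma> \<tau>) M \<sigma> \<tau>
      = (\<Sum>\<rho>\<in>agreeing_cfgs p U \<sigma>. \<Sum>i<n. X i \<sigma> \<rho> * M \<rho> \<tau>)"
    by (simp add: opmult_eq_sum_agreeing[OF local_on_sum[OF assms]] sum_distrib_right)
  also have "\<dots> = (\<Sum>i<n. opmult p (X i) M \<sigma> \<tau>)"
    by (subst sum.swap) (simp add: opmult_eq_sum_agreeing[OF X])
  finally show "opmult p (\<lambda>\<sigma> \<tau>. \<Sum>i<n. X i \<sigma> \<tau>) M \<sigma> \<tau> = (\<Sum>i<n. opmult p (X i) M \<sigma> \<tau>)" .
qed

lemma opmult_commute_sum_products:
  assumes c: "local_on p V c" and "finite U"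
    and local: "\<And>k. k < n \<Longrightarrow> local_on p U (a k) \<and> local_on p U (b k)"
    and commute: "\<And>k. k < n \<Longrightarrow> opmult p c (a k) = opmult p (a k) c \<and> opmult p c (b k) = opmult p (b k) c"
  shows "opmult p c (\<lambda>\<sigma> \<tau>. \<Sum>k<n. opmult p (a k) (b k) \<sigma> \<tau>)
       = opmult p (\<lambda>\<sigma> \<tau>. \<Sum>k<n. opmult p (a k) (b k) \<sigma> \<tau>) c"
proof -
  have "opmult p c (opmult p (a k) (b k)) = opmult p (opmult p (a k) (b k)) c" if "k < n" for k
  proof -
    have a: "local_on p U (a k)" and b: "local_on p U (b k)" using local[OF \<open>k < n\<close>] by auto
    have "opmult p c (opmult p (a k) (b k)) = opmult p (opmult p (a k) c) (b k)"
      using opmult_assoc[OF c a] commute[OF \<open>k < n\<close>] by simp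
    also have "\<dots> = opmult p (a k) (opmult p (b k) c)"
      using opmult_assoc[OF a c] commute[OF \<open>k < n\<close>] by simp
    also have "\<dots> = opmult p (opmult p (a k) (b k)) c"
      by (rule opmult_assoc[OF a b, symmetric])
    finally show ?thesis .
  qed
  moreover have "local_on p U (opmult p (a k) (b k))" if "k < n" for k
    using local_on_opmult[of p U "a k" U "b k"] local[OF that] by simp
  ultimately show ?thesis
    by (simp add: opmult_sum_distrib_left[OF c] opmult_sum_distrib_right[OF _ \<open>finite U\<close>])
qed

subsection \<open>Matrix units at a site\<close>

definition site_unit :: "('d site \<Rightarrow> nat) \<Rightarrow> 'd site \<Rightarrow> nat \<Rightarrow> nat \<Rightarrow> 'd op" where
  "site_unit p s i j = (\<lambda>\<sigma> \<tau>. if valid_cfg p \<sigma> \<and> valid_cfg p \<tau> \<and> agree_off {s} \<sigma> \<tau> \<and> \<sigma> s = i \<and> \<tau> s = j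
     then 1 else 0)"

lemma inMat_site_unit: "inMat p {s} (site_unit p s i j)"
  unfolding inMat_def site_unit_def agree_on_def by auto

lemma agree_off_commute: "agree_off S \<sigma> \<tau> \<longleftrightarrow> agree_off S \<tau> \<sigma>"
  unfolding agree_off_def by auto

lemma agree_off_singleton_imp_upd: "agree_off {s} \<sigma> \<tau> \<Longrightarrow> \<tau> = \<sigma>(s := \<tau> s)"
  unfolding agree_off_def by (rule ext) simp

lemma opmult_site_unit_right:
  assumes c: "local_on p S c" and "valid_cfg p \<tau>" and "i < p s"
  shows "opmult p c (site_unit p s i j) \<sigma> \<tau> = (if \<tau> s = j then c \<sigma> (\<tau>(s := i)) else 0)"
proof -
  have "valid_cfg p (\<tau>(s := i))" using assms valid_cfg_upd by blast
  moreover have "site_unit p s i j \<rho> \<tau> = 0" if "\<rho> \<noteq> \<tau>(s := i)" for \<rho>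
    using that agree_off_singleton_imp_upd[of s \<tau> \<rho>] agree_off_commute[of "{s}" \<rho> \<tau>]
    by (auto simp: site_unit_def)
  ultimately have "opmult p c (site_unit p s i j) \<sigma> \<tau> = (\<Sum>\<rho>\<in>{\<tau>(s := i)}. c \<sigma> \<rho> * site_unit p s i j \<rho> \<tau>)"
    by (intro opmult_eq_sum_over local_on_finite_nonzero[OF c]) auto
  with assms \<open>valid_cfg p (\<tau>(s := i))\<close> show ?thesis
    by (simp add: site_unit_def agree_off_def)
qed

lemma opmult_site_unit_left:
  assumes "valid_cfg p \<sigma>" and "j < p s"
  shows "opmult p (site_unit p s i j) c \<sigma> \<tau> = (if \<sigma> s = i then c (\<sigma>(s := j)) \<tau> else 0)"
proof -
  have "valid_cfg p (\<sigma>(s := j))" using assms valid_cfg_upd by blast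
  moreover have zero: "site_unit p s i j \<sigma> \<rho> = 0" if "\<rho> \<noteq> \<sigma>(s := j)" for \<rho>
    using that agree_off_singleton_imp_upd[of s \<sigma> \<rho>] by (auto simp: site_unit_def)
  moreover have "finite {\<rho>. valid_cfg p \<rho> \<and> site_unit p s i j \<sigma> \<rho> \<noteq> 0}"
    by (rule finite_subset[of _ "{\<sigma>(s := j)}"]) (use zero in auto)
  ultimately have "opmult p (site_unit p s i j) c \<sigma> \<tau> = (\<Sum>\<rho>\<in>{\<sigma>(s := j)}. site_unit p s i j \<sigma> \<rho> * c \<rho> \<tau>)"
    by (intro opmult_eq_sum_over) auto
  with assms \<open>valid_cfg p (\<sigma>(s := j))\<close> show ?thesis
    by (simp add: site_unit_def agree_off_def)
qed

lemma commutes_site_unit_entries: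
  assumes c: "local_on p S c" and commute: "opmult p c (site_unit p s i j) = opmult p (site_unit p s i j) c"
    and "valid_cfg p \<sigma>" "valid_cfg p \<tau>" "i < p s" "j < p s"
  shows "(if \<tau> s = j then c \<sigma> (\<tau>(s := i)) else 0) = (if \<sigma> s = i then c (\<sigma>(s := j)) \<tau> else 0)"
  using commute opmult_site_unit_right[OF c, of \<tau> i s j \<sigma>] opmult_site_unit_left[of p \<sigma> j s i c \<tau>] assms
  by metis

lemma commutes_site_units_imp_diagonal:
  assumes c: "local_on p S c"
    and commute: "\<And>i j. i < p s \<Longrightarrow> j < p s \<Longrightarrow> opmult p c (site_unit p s i j) = opmult p (site_unit p s i j) c"
    and "valid_cfg p \<sigma>" "valid_cfg p \<tau>" "\<sigma> s \<noteq> \<tau> s"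
  shows "c \<sigma> \<tau> = 0"
proof -
  have "\<tau> s < p s" using \<open>valid_cfg p \<tau>\<close> by (simp add: valid_cfg_def)
  from commutes_site_unit_entries[OF c commute[OF this this] assms(3,4) this this] \<open>\<sigma> s \<noteq> \<tau> s\<close>
  show ?thesis by simp
qed

lemma commutes_site_units_imp_shift_invariant:
  assumes c: "local_on p S c"
    and commute: "\<And>i j. i < p s \<Longrightarrow> j < p s \<Longrightarrow> opmult p c (site_unit p s i j) = opmult p (site_unit p s i j) c"
    and "valid_cfg p \<sigma>" "valid_cfg p \<tau>" "\<sigma> s = \<tau> s" "k < p s"
  shows "c (\<sigma>(s := k)) (\<tau>(s := k)) = c \<sigma> \<tau>"
proof -
  have "\<tau> s < p s" using \<open>valid_cfg p \<tau>\<close> by (simp add: valid_cfg_def)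
  moreover have "valid_cfg p (\<sigma>(s := k))" using assms valid_cfg_upd by blast
  ultimately have "c (\<sigma>(s := k)) (\<tau>(s := k)) = c (\<sigma>(s := k, s := \<tau> s)) \<tau>"
    using commutes_site_unit_entries[OF c commute, of k "\<tau> s" "\<sigma>(s := k)" \<tau>] assms by simp
  also have "\<sigma>(s := k, s := \<tau> s) = \<sigma>" using \<open>\<sigma> s = \<tau> s\<close> by auto
  finally show ?thesis .
qed

lemma inMat_remove_site:
  assumes c: "inMat p S c"
    and commute: "\<And>i j. i < p s \<Longrightarrow> j < p s \<Longrightarrow> opmult p c (site_unit p s i j) = opmult p (site_unit p s i j) c"
  shows "inMat p (S - {s}) c"
  unfolding inMat_def
proof (intro conjI allI impI)
  show "finite (S - {s})" using c by (simp add: inMat_def)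
  fix \<sigma> \<tau> assume "\<not> (valid_cfg p \<sigma> \<and> valid_cfg p \<tau>)"
  then show "c \<sigma> \<tau> = 0" using c inMat_zero_if_invalid by blast
next
  fix \<sigma> \<tau> assume v: "valid_cfg p \<sigma>" "valid_cfg p \<tau>" and "\<not> agree_off (S - {s}) \<sigma> \<tau>"
  then consider "\<not> agree_off S \<sigma> \<tau>" | "\<sigma> s \<noteq> \<tau> s" by (auto simp: agree_off_def)
  then show "c \<sigma> \<tau> = 0"
    using inMat_zero_if_not_agree_off[OF c v] commutes_site_units_imp_diagonal[OF inMat_imp_local_on[OF c] commute v]
    by cases
next
  fix \<sigma> \<tau> \<sigma>' \<tau>'
  assume v: "valid_cfg p \<sigma>" "valid_cfg p \<tau>" "valid_cfg p \<sigma>'" "valid_cfg p \<tau>'"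
    and off: "agree_off (S - {s}) \<sigma> \<tau>" "agree_off (S - {s}) \<sigma>' \<tau>'"
    and on: "agree_on (S - {s}) \<sigma> \<sigma>'" "agree_on (S - {s}) \<tau> \<tau>'"
  let ?k = "\<sigma>' s"
  have k: "?k < p s" using v(3) by (simp add: valid_cfg_def)
  have "\<sigma> s = \<tau> s" "\<sigma>' s = \<tau>' s" using off by (simp_all add: agree_off_def)
  have "c \<sigma> \<tau> = c (\<sigma>(s := ?k)) (\<tau>(s := ?k))"
    using commutes_site_units_imp_shift_invariant[OF inMat_imp_local_on[OF c] commute v(1,2) \<open>\<sigma> s = \<tau> s\<close> k] ..
  also have "\<dots> = c \<sigma>' \<tau>'"
  proof (rule inMat_entry_eq[OF c _ _ v(3,4)])
    show "valid_cfg p (\<sigma>(s := ?k))" "valid_cfg p (\<tau>(s := ?k))"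
      using valid_cfg_upd[OF v(1) k] valid_cfg_upd[OF v(2) k] .
    show "agree_off S (\<sigma>(s := ?k)) (\<tau>(s := ?k))" "agree_off S \<sigma>' \<tau>'"
      using off by (auto simp: agree_off_def)
    show "agree_on S (\<sigma>(s := ?k)) \<sigma>'" "agree_on S (\<tau>(s := ?k)) \<tau>'"
      using on \<open>\<sigma>' s = \<tau>' s\<close> by (auto simp: agree_on_def)
  qed
  finally show "c \<sigma> \<tau> = c \<sigma>' \<tau>'" .
qed

subsection \<open>Supports\<close>

lemma inMat_Int:
  assumes S: "inMat p S K" and T: "inMat p T K" shows "inMat p (S \<inter> T) K"
  unfolding inMat_def
proof (intro conjI allI impI)
  show "finite (S \<inter> T)" using S by (simp add: inMat_def)
  fix \<sigma> \<tau> assume "\<not> (valid_cfg p \<sigma> \<and> valid_cfg p \<tau>)"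
  then show "K \<sigma> \<tau> = 0" using S inMat_zero_if_invalid by blast
next
  fix \<sigma> \<tau> assume v: "valid_cfg p \<sigma>" "valid_cfg p \<tau>" and "\<not> agree_off (S \<inter> T) \<sigma> \<tau>"
  then consider "\<not> agree_off S \<sigma> \<tau>" | "\<not> agree_off T \<sigma> \<tau>" by (auto simp: agree_off_def)
  then show "K \<sigma> \<tau> = 0"
    using inMat_zero_if_not_agree_off[OF S v] inMat_zero_if_not_agree_off[OF T v] by cases
next
  fix \<sigma> \<tau> \<sigma>' \<tau>'
  assume v: "valid_cfg p \<sigma>" "valid_cfg p \<tau>" "valid_cfg p \<sigma>'" "valid_cfg p \<tau>'"
    and off: "agree_off (S \<inter> T) \<sigma> \<tau>" "agree_off (S \<inter> T) \<sigma>' \<tau>'"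
    and on: "agree_on (S \<inter> T) \<sigma> \<sigma>'" "agree_on (S \<inter> T) \<tau> \<tau>'"
  \<comment> \<open>pass through the configurations that follow the unprimed ones on S and the primed ones off S\<close>
  define \<mu> where "\<mu> t = (if t \<in> S then \<sigma> t else \<sigma>' t)" for t
  define \<nu> where "\<nu> t = (if t \<in> S then \<tau> t else \<tau>' t)" for t
  have vm: "valid_cfg p \<mu>" and vn: "valid_cfg p \<nu>"
    unfolding \<mu>_def \<nu>_def using v by (simp_all add: valid_cfg_merge)
  have "K \<sigma> \<tau> = K \<mu> \<nu>"
    by (rule inMat_entry_eq[OF S v(1,2) vm vn])
      (use off in \<open>auto simp: agree_off_def agree_on_def \<mu>_def \<nu>_def\<close>)
  also have "\<dots> = K \<sigma>' \<tau>'"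
    by (rule inMat_entry_eq[OF T vm vn v(3,4)])
      (use off on in \<open>auto simp: agree_off_def agree_on_def \<mu>_def \<nu>_def\<close>)
  finally show "K \<sigma> \<tau> = K \<sigma>' \<tau>'" .
qed

lemma inMat_mono:
  assumes S: "inMat p S K" and "S \<subseteq> T" and "finite T" shows "inMat p T K"
  unfolding inMat_def
proof (intro conjI allI impI)
  show "finite T" by fact
  fix \<sigma> \<tau> assume "\<not> (valid_cfg p \<sigma> \<and> valid_cfg p \<tau>)"
  then show "K \<sigma> \<tau> = 0" using S inMat_zero_if_invalid by blast
next
  fix \<sigma> \<tau> assume "valid_cfg p \<sigma>" "valid_cfg p \<tau>" "\<not> agree_off T \<sigma> \<tau>"
  then show "K \<sigma> \<tau> = 0"
    using inMat_zero_if_not_agree_off[OF S] \<open>S \<subseteq> T\<close> by (auto simp: agree_off_def)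
next
  fix \<sigma> \<tau> \<sigma>' \<tau>'
  assume v: "valid_cfg p \<sigma>" "valid_cfg p \<tau>" "valid_cfg p \<sigma>'" "valid_cfg p \<tau>'"
    and "agree_off T \<sigma> \<tau>" "agree_off T \<sigma>' \<tau>'" "agree_on T \<sigma> \<sigma>'" "agree_on T \<tau> \<tau>'"
  then have same: "agree_off S \<sigma> \<tau> \<longleftrightarrow> agree_off S \<sigma>' \<tau>'"
    and on: "agree_on S \<sigma> \<sigma>'" "agree_on S \<tau> \<tau>'"
    using \<open>S \<subseteq> T\<close> unfolding agree_off_def agree_on_def by (metis subset_iff)+
  show "K \<sigma> \<tau> = K \<sigma>' \<tau>'"
  proof (cases "agree_off S \<sigma> \<tau>")
    case True
    then show ?thesis using inMat_entry_eq[OF S v] same on by blast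
  next
    case False
    then show ?thesis using inMat_zero_if_not_agree_off[OF S] v same by metis
  qed
qed

lemma Supp_subset: "inMat p S K \<Longrightarrow> Supp p K \<subseteq> S"
  unfolding Supp_def by blast

lemma inMat_Supp:
  assumes "inMat p S K" shows "inMat p (Supp p K) K"
proof -
  obtain S0 where S0: "inMat p S0 K" and least: "\<And>T. inMat p T K \<Longrightarrow> card S0 \<le> card T"
    using ex_has_least_nat[of "\<lambda>T. inMat p T K" S card] assms by blast
  have "finite S0" using S0 by (simp add: inMat_def)
  have "S0 \<subseteq> T" if "inMat p T K" for T
  proof -
    have "card S0 \<le> card (S0 \<inter> T)" using least inMat_Int[OF S0 that] by blast
    then have "S0 \<inter> T = S0" using card_subset_eq[OF \<open>finite S0\<close>, of "S0 \<inter> T"] card_mono[OF \<open>finite S0\<close>, of "S0 \<inter> T"]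
      by auto
    then show ?thesis by blast
  qed
  then have "Supp p K = S0" using S0 unfolding Supp_def by blast
  then show ?thesis using S0 by simp
qed

lemma inMat_if_Supp_subset:
  "K \<in> MatZ p \<Longrightarrow> Supp p K \<subseteq> T \<Longrightarrow> finite T \<Longrightarrow> inMat p T K"
  unfolding MatZ_def using inMat_Supp inMat_mono by blast

lemma Supp_imp_not_commute_site_unit:
  assumes "inMat p S c" and "s \<in> Supp p c"
  obtains i j where "i < p s" "j < p s" "opmult p c (site_unit p s i j) \<noteq> opmult p (site_unit p s i j) c"
proof -
  have "Supp p c \<subseteq> S - {s}" if "\<forall>i<p s. \<forall>j<p s. opmult p c (site_unit p s i j) = opmult p (site_unit p s i j) c"
    using that by (intro Supp_subset inMat_remove_site[OF assms(1)]) blast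
  with assms(2) that show ?thesis by blast
qed

subsection \<open>Local decomposition of matrix units\<close>

lemma nbhd_mono: "S \<subseteq> T \<Longrightarrow> nbhd S l \<subseteq> nbhd T l"
  unfolding nbhd_def by blast

lemma finite_nbhd_singleton: "finite (nbhd {s :: ('d::finite) site} l)"
proof (rule finite_subset)
  show "nbhd {s} l \<subseteq> PiE UNIV (\<lambda>i. {s i - int l .. s i + int l})"
  proof
    fix t assume "t \<in> nbhd {s} l"
    then have bound: "\<bar>t i - s i\<bar> \<le> int l" for i
      by (simp add: nbhd_def)
    have "t i \<in> {s i - int l .. s i + int l}" for i
      using bound[of i] by (simp add: abs_le_iff)
    then show "t \<in> PiE UNIV (\<lambda>i. {s i - int l .. s i + int l})"
      unfolding PiE_UNIV_domain by blast
  qed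
  show "finite (PiE (UNIV :: 'd set) (\<lambda>i. {s i - int l .. s i + int l}))"
    by (intro finite_PiE) auto
qed

lemma site_unit_local_decomposition:
  fixes p :: "('d::finite) site \<Rightarrow> nat"
  assumes "invertible_spread p A l"
  obtains a b n where "site_unit p s i j = (\<lambda>\<sigma> \<tau>. \<Sum>k<(n::nat). opmult p (a k) (b k) \<sigma> \<tau>)"
    and "\<And>k. k < n \<Longrightarrow> a k \<in> A \<and> b k \<in> commutant p A
           \<and> inMat p (nbhd {s} l) (a k) \<and> inMat p (nbhd {s} l) (b k)"
proof -
  let ?E = "site_unit p s i j"
  have "?E \<in> MatZ p" using inMat_site_unit unfolding MatZ_def by blast
  moreover have "\<forall>x\<in>MatZ p. \<exists>(n::nat) a b. x = (\<lambda>\<sigma> \<tau>. \<Sum>k<n. opmult p (a k) (b k) \<sigma> \<tau>)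
      \<and> (\<forall>k<n. a k \<in> A \<and> b k \<in> commutant p A
        \<and> Supp p (a k) \<subseteq> nbhd (Supp p x) l \<and> Supp p (b k) \<subseteq> nbhd (Supp p x) l)"
    using assms unfolding invertible_spread_def by blast
  ultimately obtain n :: nat and a b where sum: "?E = (\<lambda>\<sigma> \<tau>. \<Sum>k<n. opmult p (a k) (b k) \<sigma> \<tau>)"
    and factors: "\<forall>k<n. a k \<in> A \<and> b k \<in> commutant p A
      \<and> Supp p (a k) \<subseteq> nbhd (Supp p ?E) l \<and> Supp p (b k) \<subseteq> nbhd (Supp p ?E) l"
    using assms unfolding invertible_spread_def by blast
  have "nbhd (Supp p ?E) l \<subseteq> nbhd {s} l"
    by (intro nbhd_mono Supp_subset inMat_site_unit)
  moreover have "A \<subseteq> MatZ p" "commutant p A \<subseteq> MatZ p"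
    using assms by (auto simp: invertible_spread_def unital_star_subalg_def commutant_def)
  ultimately show thesis
    using that[OF sum] factors inMat_if_Supp_subset[OF _ _ finite_nbhd_singleton] by (meson subset_iff)
qed

lemma not_commute_local_factor:
  fixes p :: "('d::finite) site \<Rightarrow> nat"
  assumes "invertible_spread p A l" and "c \<in> MatZ p" and "s \<in> Supp p c"
  obtains a b where "a \<in> A" "b \<in> commutant p A" "inMat p (nbhd {s} l) a" "inMat p (nbhd {s} l) b"
    "opmult p c a \<noteq> opmult p a c \<or> opmult p c b \<noteq> opmult p b c"
proof -
  obtain S where c: "inMat p S c" using \<open>c \<in> MatZ p\<close> by (auto simp: MatZ_def)
  obtain i j where unit: "opmult p c (site_unit p s i j) \<noteq> opmult p (site_unit p s i j) c"
    by (rule Supp_imp_not_commute_site_unit[OF c \<open>s \<in> Supp p c\<close>]) blast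
  obtain a b n where decomp: "site_unit p s i j = (\<lambda>\<sigma> \<tau>. \<Sum>k<(n::nat). opmult p (a k) (b k) \<sigma> \<tau>)"
    and factors: "\<And>k. k < n \<Longrightarrow> a k \<in> A \<and> b k \<in> commutant p A
      \<and> inMat p (nbhd {s} l) (a k) \<and> inMat p (nbhd {s} l) (b k)"
    by (rule site_unit_local_decomposition[OF assms(1)]) (rule that)
  have local: "local_on p (nbhd {s} l) (a k) \<and> local_on p (nbhd {s} l) (b k)" if "k < n" for k
    using factors[OF that] inMat_imp_local_on by blast
  have "\<exists>k<n. opmult p c (a k) \<noteq> opmult p (a k) c \<or> opmult p c (b k) \<noteq> opmult p (b k) c"
  proof (rule ccontr)
    assume "\<not> ?thesis"
    then have "opmult p c (site_unit p s i j) = opmult p (site_unit p s i j) c"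
      unfolding decomp
      by (intro opmult_commute_sum_products[OF inMat_imp_local_on[OF c] finite_nbhd_singleton local])
        blast+
    with unit show False ..
  qed
  then obtain k where "k < n"
    and "opmult p c (a k) \<noteq> opmult p (a k) c \<or> opmult p c (b k) \<noteq> opmult p (b k) c"
    by blast
  with factors[OF \<open>k < n\<close>] show thesis
    by (intro that[of "a k" "b k"]) auto
qed

theorem lemma2p2:
  fixes p :: "('d::finite) site \<Rightarrow> nat" and A :: "'d op set" and l :: nat
  assumes "\<forall>s. 0 < p s"
    and "invertible_spread p A l"
  shows "VS p A \<and> VS p (commutant p A)"
proof -
  have "0 < l" and "A \<subseteq> MatZ p"
    using assms(2) by (simp_all add: invertible_spread_def unital_star_subalg_def)
  have "VS p A"
    unfolding VS_def
  proof (intro exI[of _ l] conjI ballI impI \<open>0 < l\<close>)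
    fix c s assume "c \<in> A" "s \<in> Supp p c"
    with \<open>A \<subseteq> MatZ p\<close> have "c \<in> MatZ p" by blast
    then obtain a b where "a \<in> A" "b \<in> commutant p A" "inMat p (nbhd {s} l) a" "inMat p (nbhd {s} l) b"
      and "opmult p c a \<noteq> opmult p a c \<or> opmult p c b \<noteq> opmult p b c"
      by (rule not_commute_local_factor[OF assms(2) _ \<open>s \<in> Supp p c\<close>]) (rule that)
    moreover have "opmult p c b = opmult p b c"
      using \<open>c \<in> A\<close> \<open>b \<in> commutant p A\<close> by (simp add: commutant_def)
    ultimately show "\<exists>w\<in>A. inMat p (nbhd {s} l) w \<and> opmult p c w \<noteq> opmult p w c"
      by blast
  qed
  moreover have "VS p (commutant p A)"
    unfolding VS_def
  proof (intro exI[of _ l] conjI ballI impI \<open>0 < l\<close>)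
    fix c s assume "c \<in> commutant p A" "s \<in> Supp p c"
    then have "c \<in> MatZ p" by (simp add: commutant_def)
    then obtain a b where "a \<in> A" "b \<in> commutant p A" "inMat p (nbhd {s} l) a" "inMat p (nbhd {s} l) b"
      and "opmult p c a \<noteq> opmult p a c \<or> opmult p c b \<noteq> opmult p b c"
      by (rule not_commute_local_factor[OF assms(2) _ \<open>s \<in> Supp p c\<close>]) (rule that)
    moreover have "opmult p c a = opmult p a c"
      using \<open>c \<in> commutant p A\<close> \<open>a \<in> A\<close> by (simp add: commutant_def)
    ultimately show "\<exists>w\<in>commutant p A. inMat p (nbhd {s} l) w \<and> opmult p c w \<noteq> opmult p w c"
      by blast
  qed
  ultimately show ?thesis ..
qed

end
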